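(* Let $U$ be a Banach space and $F$ a Banach lattice with partial order $\leqslant_F$. Let $A\colon U\to F$ be a linear, continuous and injective operator, let $f\in F$ and let $\bar u\in U$ be the exact solution of $A\bar u=f$. Let $(f^l_n)_{n\in\mathbb N}$, $(f^u_n)_{n\in\mathbb N}$ be sequences in $F$ such that for all $n$: $f^l_{n+1}\geqslant_F f^l_n$, $f^u_{n+1}\leqslant_F f^u_n$, $f^l_n\leqslant_F f\leqslant_F f^u_n$, and $\|f^l_n-f^u_n\|\to 0$ as $n\to\infty$. (There are no errors in the operator $A$.) Define the feasible sets $$U_n=\{u\in U:\ f^l_n\leqslant_F Au\leqslant_F f^u_n\}.$$ Let $R\colon U\to\mathbb R\cup\{+\infty\}$ be a functional satisfying either (I) $R$ is bounded from below on $U$, $R$ is lower semi-continuous, and the level sets $\{u: R(u)\leqslant C\}$ ($C$ constant) are sequentially compact in $U$ in the norm topology; or (II) $R$ is bounded from below on $U$, $R$ is weakly lower semi-continuous, the level sets $\{u: R(u)\leqslant C\}$ are weakly sequentially compact in $U$, and $R$ has the Radon–Riesz property. Let $u_n=\operatorname{argmin}_{u\in U_n}R(u)$. Then $u_n\to\bar u$ strongly in $U$ and $R(u_n)\to R(\bar u)$.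
   Context: A functional $R\colon U\to\mathbb R$ has the Radon–Riesz property if for any sequence $u_n\in U$, weak convergence $u_n\rightharpoonup u_0$ together with convergence of values $R(u_n)\to R(u_0)$ implies strong convergence $u_n\to u_0$. A Banach lattice is a vector lattice with a complete monotone norm ($|x|\leqslant|y|\Rightarrow\|x\|\leqslant\|y\|$). *)

theory Defs
  imports "HOL-Analysis.Analysis"
begin

text \<open>The modulus is sup x (-x).\<close>
class banach_lattice = banach + lattice +
  assumes bl_add_left_mono: "x \<le> y \<Longrightarrow> z + x \<le> z + y"
    and bl_scaleR_mono: "x \<le> y \<Longrightarrow> 0 \<le> c \<Longrightarrow> c *\<^sub>R x \<le> c *\<^sub>R y"
    and bl_norm_mono: "sup x (- x) \<le> sup y (- y) \<Longrightarrow> norm x \<le> norm y"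

definition weak_conv :: "(nat \<Rightarrow> 'a::real_normed_vector) \<Rightarrow> 'a \<Rightarrow> bool" where
  "weak_conv s x \<longleftrightarrow>
     (\<forall>\<phi>::'a \<Rightarrow> real. bounded_linear \<phi> \<longrightarrow> (\<lambda>n. \<phi> (s n)) \<longlonglongrightarrow> \<phi> x)"

definition lsc :: "('a::topological_space \<Rightarrow> ereal) \<Rightarrow> bool" where
  "lsc R \<longleftrightarrow> (\<forall>c. closed {u. R u \<le> c})"

definition weakly_lsc :: "('a::real_normed_vector \<Rightarrow> ereal) \<Rightarrow> bool" where
  "weakly_lsc R \<longleftrightarrow> (\<forall>s x. weak_conv s x \<longrightarrow> R x \<le> liminf (\<lambda>n. R (s n)))"

definition weakly_seq_compact :: "'a::real_normed_vector set \<Rightarrow> bool" where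
  "weakly_seq_compact S \<longleftrightarrow>
     (\<forall>f::nat \<Rightarrow> 'a. (\<forall>n. f n \<in> S) \<longrightarrow> (\<exists>l\<in>S. \<exists>r. strict_mono r \<and> weak_conv (f \<circ> r) l))"

definition radon_riesz :: "('a::real_normed_vector \<Rightarrow> ereal) \<Rightarrow> bool" where
  "radon_riesz R \<longleftrightarrow>
     (\<forall>s x. weak_conv s x \<and> (\<lambda>n. R (s n)) \<longlonglongrightarrow> R x \<longrightarrow> s \<longlonglongrightarrow> x)"

end

theory Submission
  imports Defs
begin

text \<open>The feasible sets decrease and all contain the exact solution, so the minimal values
  R(u n) increase to a limit L \<le> R ubar and all u n lie in one sublevel set of R.
  Since the data bounds squeeze A (u n) and f into order intervals of vanishing width, the
  monotone lattice norm gives A (u n) \<rightarrow> f = A ubar. By (weak) sequential compactness every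
  subsequence of u has a further (weakly) convergent subsequence; its limit is ubar because A
  is continuous and injective, where in the weak case uniqueness of weak limits rests on the
  Hahn--Banach theorem. Lower semicontinuity then forces L = R ubar, and under (II) the
  Radon--Riesz property turns the weak convergence into strong convergence.\<close>

text \<open>Graphs of linear functionals on subspaces that are dominated by the norm; Zorn's lemma
  on this family, ordered by inclusion, yields the Hahn--Banach extension.\<close>
definition norm_dominated_graph :: "('a::real_normed_vector \<times> real) set \<Rightarrow> bool" where
  "norm_dominated_graph G \<longleftrightarrow>
     (0, 0) \<in> G \<and>
     (\<forall>a b a' b'. (a, b) \<in> G \<longrightarrow> (a', b') \<in> G \<longrightarrow> (a + a', b + b') \<in> G) \<and>
     (\<forall>c a b. (a, b) \<in> G \<longrightarrow> (c *\<^sub>R a, c * b) \<in> G) \<and>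
     (\<forall>a b. (a, b) \<in> G \<longrightarrow> b \<le> norm a)"

lemma norm_dominated_graphD:
  assumes "norm_dominated_graph G"
  shows norm_dominated_graph_zero: "(0, 0) \<in> G"
    and norm_dominated_graph_add: "(a, b) \<in> G \<Longrightarrow> (a', b') \<in> G \<Longrightarrow> (a + a', b + b') \<in> G"
    and norm_dominated_graph_scaleR: "(a, b) \<in> G \<Longrightarrow> (c *\<^sub>R a, c * b) \<in> G"
    and norm_dominated_graph_le_norm: "(a, b) \<in> G \<Longrightarrow> b \<le> norm a"
  using assms unfolding norm_dominated_graph_def by blast+

lemma norm_dominated_graph_unique:
  assumes G: "norm_dominated_graph G" and "(a, b) \<in> G" "(a, b') \<in> G"
  shows "b = b'"
proof -
  have "(a + (-1) *\<^sub>R a, b + (-1) * b') \<in> G" "(a + (-1) *\<^sub>R a, b' + (-1) * b) \<in> G"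
    using assms by (blast intro: norm_dominated_graph_add norm_dominated_graph_scaleR)+
  then have "b - b' \<le> 0" "b' - b \<le> 0"
    using norm_dominated_graph_le_norm[OF G] by fastforce+
  then show ?thesis by simp
qed

lemma norm_dominated_graph_line: "norm_dominated_graph (range (\<lambda>t. (t *\<^sub>R x, t * norm x)))"
  unfolding norm_dominated_graph_def
proof (intro conjI allI impI)
  show "(0, 0) \<in> range (\<lambda>t. (t *\<^sub>R x, t * norm x))"
    by (auto intro!: image_eqI[of _ _ 0])
next
  fix a b a' b'
  assume "(a, b) \<in> range (\<lambda>t. (t *\<^sub>R x, t * norm x))" "(a', b') \<in> range (\<lambda>t. (t *\<^sub>R x, t * norm x))"
  then obtain t t' where "a = t *\<^sub>R x" "b = t * norm x" "a' = t' *\<^sub>R x" "b' = t' * norm x"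
    by auto
  then show "(a + a', b + b') \<in> range (\<lambda>t. (t *\<^sub>R x, t * norm x))"
    by (auto intro!: image_eqI[of _ _ "t + t'"] simp: algebra_simps scaleR_add_left)
next
  fix c a b
  assume "(a, b) \<in> range (\<lambda>t. (t *\<^sub>R x, t * norm x))"
  then obtain t where "a = t *\<^sub>R x" "b = t * norm x" by auto
  then show "(c *\<^sub>R a, c * b) \<in> range (\<lambda>t. (t *\<^sub>R x, t * norm x))"
    by (auto intro!: image_eqI[of _ _ "c * t"])
next
  fix a b
  assume "(a, b) \<in> range (\<lambda>t. (t *\<^sub>R x, t * norm x))"
  then show "b \<le> norm a" by (auto simp: mult_right_mono)
qed

lemma norm_dominated_graph_Union_chain:
  assumes "C \<noteq> {}" "\<And>G. G \<in> C \<Longrightarrow> norm_dominated_graph G" "\<And>G G'. G \<in> C \<Longrightarrow> G' \<in> C \<Longrightarrow> G \<subseteq> G' \<or> G' \<subseteq> G"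
  shows "norm_dominated_graph (\<Union>C)"
  unfolding norm_dominated_graph_def
proof (intro conjI allI impI)
  obtain G where "G \<in> C"
    using assms(1) by blast
  then show "(0, 0) \<in> \<Union>C"
    using norm_dominated_graph_zero[OF assms(2)] by blast
next
  fix a b a' b'
  assume "(a, b) \<in> \<Union>C" "(a', b') \<in> \<Union>C"
  then obtain G G' where GG': "G \<in> C" "G' \<in> C" "(a, b) \<in> G" "(a', b') \<in> G'"
    by blast
  have "G \<subseteq> G' \<or> G' \<subseteq> G"
    using GG'(1,2) by (rule assms(3))
  then obtain H where "H \<in> C" "(a, b) \<in> H" "(a', b') \<in> H"
    using GG' by blast
  then show "(a + a', b + b') \<in> \<Union>C"
    using norm_dominated_graph_add[OF assms(2)] by blast
next
  fix c a b
  assume "(a, b) \<in> \<Union>C"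
  then show "(c *\<^sub>R a, c * b) \<in> \<Union>C"
    using norm_dominated_graph_scaleR[OF assms(2)] by blast
next
  fix a b
  assume "(a, b) \<in> \<Union>C"
  then show "b \<le> norm a"
    using norm_dominated_graph_le_norm[OF assms(2)] by blast
qed

text \<open>The classical Hahn--Banach interval: admissible values at a new point y, nonempty
  by the triangle inequality through y.\<close>
lemma norm_dominated_graph_extension_value:
  assumes G: "norm_dominated_graph G"
  obtains c where "\<And>a b. (a, b) \<in> G \<Longrightarrow> b - norm (a - y) \<le> c"
    and "\<And>a b. (a, b) \<in> G \<Longrightarrow> c \<le> norm (a + y) - b"
proof -
  define S where "S = {b - norm (a - y) | a b. (a, b) \<in> G}"
  have below: "s \<le> norm (a + y) - b" if "s \<in> S" "(a, b) \<in> G" for s a b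
  proof -
    obtain a' b' where s: "s = b' - norm (a' - y)" "(a', b') \<in> G"
      using \<open>s \<in> S\<close> unfolding S_def by blast
    have "b' + b \<le> norm (a' + a)"
      using G s(2) that(2) by (blast intro: norm_dominated_graph_le_norm norm_dominated_graph_add)
    also have "\<dots> \<le> norm (a' - y) + norm (a + y)"
      using norm_triangle_ineq[of "a' - y" "a + y"] by simp
    finally show ?thesis using s by simp
  qed
  have "S \<noteq> {}"
    using norm_dominated_graph_zero[OF G] unfolding S_def by blast
  moreover have "bdd_above S"
    using below norm_dominated_graph_zero[OF G] unfolding bdd_above_def by blast
  ultimately show ?thesis
  proof (intro that[of "Sup S"])
    fix a b
    assume "(a, b) \<in> G"
    then show "b - norm (a - y) \<le> Sup S"
      using \<open>bdd_above S\<close> by (intro cSup_upper) (auto simp: S_def)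
  next
    fix a b
    assume "(a, b) \<in> G"
    then show "Sup S \<le> norm (a + y) - b"
      using \<open>S \<noteq> {}\<close> below by (intro cSup_least) auto
  qed
qed

lemma norm_dominated_graph_extend:
  assumes G: "norm_dominated_graph G" and y: "y \<notin> fst ` G"
  obtains G' where "norm_dominated_graph G'" "G \<subset> G'"
proof -
  obtain c where lower: "\<And>a b. (a, b) \<in> G \<Longrightarrow> b - norm (a - y) \<le> c"
    and upper: "\<And>a b. (a, b) \<in> G \<Longrightarrow> c \<le> norm (a + y) - b"
    using norm_dominated_graph_extension_value[OF G] by blast
  define G' where "G' = {(a + t *\<^sub>R y, b + t * c) | a b t. (a, b) \<in> G}"
  have G'I: "(a + t *\<^sub>R y, b + t * c) \<in> G'" if "(a, b) \<in> G" for a b t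
    unfolding G'_def using that by blast
  have dominated: "b + t * c \<le> norm (a + t *\<^sub>R y)" if "(a, b) \<in> G" for a b t
  proof -
    consider "t = 0" | "t > 0" | "t < 0" by linarith
    then show ?thesis
    proof cases
      case 1
      then show ?thesis using G that norm_dominated_graph_le_norm by auto
    next
      case 2
      have "(inverse t *\<^sub>R a, inverse t * b) \<in> G"
        using G that norm_dominated_graph_scaleR by blast
      then have "t * c \<le> t * (norm (inverse t *\<^sub>R a + y) - inverse t * b)"
        using 2 upper by (simp add: mult_left_mono)
      also have "\<dots> = norm (t *\<^sub>R (inverse t *\<^sub>R a + y)) - b"
        using 2 by (simp add: right_diff_distrib)
      finally show ?thesis
        using 2 by (simp add: scaleR_add_right)
    next
      case 3
      have "(inverse (- t) *\<^sub>R a, inverse (- t) * b) \<in> G"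
        using G that norm_dominated_graph_scaleR by blast
      then have "- t * (inverse (- t) * b - norm (inverse (- t) *\<^sub>R a - y)) \<le> - t * c"
        using 3 lower by (simp add: mult_left_mono)
      also have "- t * (inverse (- t) * b - norm (inverse (- t) *\<^sub>R a - y))
          = b - norm ((- t) *\<^sub>R (inverse (- t) *\<^sub>R a - y))"
        using 3 by (simp add: right_diff_distrib)
      finally show ?thesis
        using 3 by (simp add: scaleR_diff_right)
    qed
  qed
  have "norm_dominated_graph G'"
    unfolding norm_dominated_graph_def
  proof (intro conjI allI impI)
    show "(0, 0) \<in> G'"
      using G'I[of 0 0 0] norm_dominated_graph_zero[OF G] by simp
  next
    fix a b a' b'
    assume "(a, b) \<in> G'" "(a', b') \<in> G'"
    then obtain a1 b1 t1 a2 b2 t2 where "(a1, b1) \<in> G" "(a2, b2) \<in> G"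
      "a = a1 + t1 *\<^sub>R y" "b = b1 + t1 * c" "a' = a2 + t2 *\<^sub>R y" "b' = b2 + t2 * c"
      unfolding G'_def by blast
    then show "(a + a', b + b') \<in> G'"
      using G'I[of "a1 + a2" "b1 + b2" "t1 + t2"] norm_dominated_graph_add[OF G]
      by (simp add: algebra_simps scaleR_add_left)
  next
    fix k a b
    assume "(a, b) \<in> G'"
    then obtain a1 b1 t where "(a1, b1) \<in> G" "a = a1 + t *\<^sub>R y" "b = b1 + t * c"
      unfolding G'_def by blast
    then show "(k *\<^sub>R a, k * b) \<in> G'"
      using G'I[of "k *\<^sub>R a1" "k * b1" "k * t"] norm_dominated_graph_scaleR[OF G]
      by (simp add: algebra_simps)
  next
    fix a b
    assume "(a, b) \<in> G'"
    then show "b \<le> norm a"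
      unfolding G'_def using dominated by blast
  qed
  moreover have "G \<subseteq> G'"
    using G'I[where t = 0] by force
  moreover have "(y, c) \<in> G'"
    using G'I[of 0 0 1] norm_dominated_graph_zero[OF G] by simp
  ultimately show ?thesis
    using y by (intro that) (auto simp: image_iff)
qed

lemma total_norm_dominated_graph:
  fixes x :: "'a::real_normed_vector"
  obtains M where "norm_dominated_graph M" "(x, norm x) \<in> M" "fst ` M = UNIV"
proof -
  define \<G> where "\<G> = {G::('a \<times> real) set. norm_dominated_graph G \<and> (x, norm x) \<in> G}"
  have line: "range (\<lambda>t. (t *\<^sub>R x, t * norm x)) \<in> \<G>"
    unfolding \<G>_def using norm_dominated_graph_line by (force intro: image_eqI[of _ _ 1])
  have "\<forall>C\<in>chains \<G>. \<exists>U\<in>\<G>. \<forall>G\<in>C. G \<subseteq> U"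
  proof
    fix C
    assume C: "C \<in> chains \<G>"
    show "\<exists>U\<in>\<G>. \<forall>G\<in>C. G \<subseteq> U"
    proof (cases "C = {}")
      case True
      then show ?thesis using line by blast
    next
      case False
      have "C \<subseteq> \<G>" "\<And>G G'. G \<in> C \<Longrightarrow> G' \<in> C \<Longrightarrow> G \<subseteq> G' \<or> G' \<subseteq> G"
        using C unfolding chains_def chain_subset_def by auto
      then have "\<Union>C \<in> \<G>"
        using False norm_dominated_graph_Union_chain[of C] unfolding \<G>_def by blast
      then show ?thesis by blast
    qed
  qed
  from Zorn_Lemma2[OF this] obtain M where M: "M \<in> \<G>" "\<And>G. G \<in> \<G> \<Longrightarrow> M \<subseteq> G \<Longrightarrow> G = M"
    by blast
  have dominated: "norm_dominated_graph M" and through_x: "(x, norm x) \<in> M"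
    using M(1) unfolding \<G>_def by auto
  have "y \<in> fst ` M" for y
  proof (rule ccontr)
    assume "y \<notin> fst ` M"
    then obtain G where G: "norm_dominated_graph G" "M \<subset> G"
      using norm_dominated_graph_extend[OF dominated] by blast
    then have "G \<in> \<G>"
      using through_x unfolding \<G>_def by blast
    with G(2) show False
      using M(2) by blast
  qed
  then show ?thesis
    using that dominated through_x by blast
qed

lemma bounded_linear_of_total_norm_dominated_graph:
  assumes M: "norm_dominated_graph M" and total: "fst ` M = UNIV"
  obtains \<phi> :: "'a::real_normed_vector \<Rightarrow> real" where "bounded_linear \<phi>" "\<And>z b. (z, b) \<in> M \<Longrightarrow> \<phi> z = b"
proof -
  define \<phi> where "\<phi> z = (THE b. (z, b) \<in> M)" for z
  have graph: "\<phi> z = b" if "(z, b) \<in> M" for z b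
    unfolding \<phi>_def
    by (rule the_equality) (use that norm_dominated_graph_unique[OF M] in blast)+
  have in_graph: "(z, \<phi> z) \<in> M" for z
  proof -
    obtain b where "(z, b) \<in> M"
      using total by (metis UNIV_I fst_eqD imageE prod.collapse)
    then show ?thesis
      using graph by simp
  qed
  have add: "\<phi> (a + b) = \<phi> a + \<phi> b" for a b
    by (rule graph, rule norm_dominated_graph_add[OF M in_graph in_graph])
  have scale: "\<phi> (r *\<^sub>R a) = r * \<phi> a" for r a
    by (rule graph, rule norm_dominated_graph_scaleR[OF M in_graph])
  have "\<phi> a \<le> norm a" for a
    using norm_dominated_graph_le_norm[OF M in_graph] .
  then have "\<bar>\<phi> a\<bar> \<le> norm a" for a
    using scale[of "-1" a] by (metis abs_le_iff mult_minus1 norm_minus_cancel scaleR_minus1_left)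
  then have "bounded_linear \<phi>"
    by (intro bounded_linear_intro[where K = 1]) (use add scale in auto)
  then show ?thesis
    using graph that by blast
qed

lemma exists_norming_functional:
  fixes x :: "'a::real_normed_vector"
  obtains \<phi> :: "'a \<Rightarrow> real" where "bounded_linear \<phi>" "\<phi> x = norm x"
proof -
  obtain M where "norm_dominated_graph M" "(x, norm x) \<in> M" "fst ` M = UNIV"
    by (rule total_norm_dominated_graph)
  then show ?thesis
    using that by (metis bounded_linear_of_total_norm_dominated_graph)
qed

lemma bounded_linear_functionals_separate:
  fixes y :: "'a::real_normed_vector"
  assumes "\<And>\<psi>::'a \<Rightarrow> real. bounded_linear \<psi> \<Longrightarrow> \<psi> y = 0"
  shows "y = 0"
proof -
  obtain \<phi> :: "'a \<Rightarrow> real" where "bounded_linear \<phi>" "\<phi> y = norm y"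
    by (rule exists_norming_functional)
  then have "norm y = 0"
    using assms by metis
  then show ?thesis by simp
qed

lemma LIMSEQ_imp_weak_conv: "s \<longlonglongrightarrow> x \<Longrightarrow> weak_conv s x"
  unfolding weak_conv_def using bounded_linear.tendsto by blast

lemma weak_conv_bounded_linear_image:
  assumes "weak_conv s x" "bounded_linear T"
  shows "weak_conv (\<lambda>n. T (s n)) (T x)"
  unfolding weak_conv_def
proof (intro allI impI)
  fix \<phi> :: "'b \<Rightarrow> real"
  assume "bounded_linear \<phi>"
  then have "bounded_linear (\<lambda>y. \<phi> (T y))"
    using bounded_linear_compose assms(2) by blast
  then show "(\<lambda>n. \<phi> (T (s n))) \<longlonglongrightarrow> \<phi> (T x)"
    using assms(1) unfolding weak_conv_def by blast
qed

lemma weak_conv_unique: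
  assumes "weak_conv s x" "weak_conv s y"
  shows "x = y"
proof -
  have "\<psi> (x - y) = 0" if "bounded_linear \<psi>" for \<psi> :: "'a \<Rightarrow> real"
  proof -
    have "\<psi> x = \<psi> y"
      using assms that unfolding weak_conv_def by (blast intro: LIMSEQ_unique)
    then show ?thesis
      using that by (simp add: linear_diff bounded_linear.linear)
  qed
  then show ?thesis
    using bounded_linear_functionals_separate[of "x - y"] by simp
qed

lemma weak_limit_eq_if_image_tendsto:
  assumes "bounded_linear A" "inj A" "weak_conv s l" "(\<lambda>n. A (s n)) \<longlonglongrightarrow> A x"
  shows "l = x"
proof -
  have "A l = A x"
    using weak_conv_unique weak_conv_bounded_linear_image[OF assms(3,1)]
      LIMSEQ_imp_weak_conv[OF assms(4)] by blast
  then show ?thesis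
    by (rule injD[OF assms(2)])
qed

lemma LIMSEQ_subsubseq:
  fixes u :: "nat \<Rightarrow> 'a::metric_space"
  assumes "\<And>r::nat \<Rightarrow> nat. strict_mono r \<Longrightarrow> \<exists>q::nat \<Rightarrow> nat. strict_mono q \<and> (u \<circ> r \<circ> q) \<longlonglongrightarrow> x"
  shows "u \<longlonglongrightarrow> x"
proof (rule ccontr)
  assume "\<not> u \<longlonglongrightarrow> x"
  then obtain e where "e > 0" "\<forall>N. \<exists>n\<ge>N. e \<le> dist (u n) x"
    unfolding lim_sequentially by (auto simp: not_less)
  then have "infinite {n. e \<le> dist (u n) x}"
    unfolding infinite_nat_iff_unbounded_le by blast
  from infinite_enumerate[OF this]
  obtain r :: "nat \<Rightarrow> nat" where r: "strict_mono r" "\<forall>n. e \<le> dist (u (r n)) x"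
    by auto
  obtain q where "(u \<circ> r \<circ> q) \<longlonglongrightarrow> x"
    using assms[OF r(1)] by blast
  then obtain N where "\<forall>n\<ge>N. dist ((u \<circ> r \<circ> q) n) x < e"
    using \<open>e > 0\<close> unfolding lim_sequentially by blast
  then have "dist (u (r (q N))) x < e"
    by simp
  with r(2) show False
    using not_less by blast
qed

lemma lsc_le_tendsto:
  assumes "lsc R" "s \<longlonglongrightarrow> x" "(\<lambda>n. R (s n)) \<longlonglongrightarrow> L"
  shows "R x \<le> L"
proof (rule dense_ge)
  fix c
  assume "L < c"
  then have "eventually (\<lambda>n. R (s n) < c) sequentially"
    by (rule order_tendstoD(2)[OF assms(3)])
  then have "eventually (\<lambda>n. s n \<in> {v. R v \<le> c}) sequentially"
    by (rule eventually_mono) simp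
  then have "x \<in> {v. R v \<le> c}"
    using assms(1,2) unfolding lsc_def by (intro Lim_in_closed_set) auto
  then show "R x \<le> c" by simp
qed

subclass (in banach_lattice) ordered_ab_group_add
  by unfold_locales (rule bl_add_left_mono)

lemma norm_diff_le_if_between:
  fixes l v h :: "'b::banach_lattice"
  assumes "l \<le> v" "v \<le> h"
  shows "norm (v - l) \<le> norm (h - l)"
proof (rule bl_norm_mono)
  have "0 \<le> v - l" "v - l \<le> h - l"
    using assms by (simp_all add: diff_right_mono)
  moreover have "- (v - l) \<le> v - l" "- (h - l) \<le> h - l"
    using calculation by (metis neg_le_0_iff_le order_trans)+
  ultimately have "sup (v - l) (- (v - l)) = v - l" "sup (h - l) (- (h - l)) = h - l"
    by (simp_all only: sup_absorb1)
  then show "sup (v - l) (- (v - l)) \<le> sup (h - l) (- (h - l))"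
    using \<open>v - l \<le> h - l\<close> by simp
qed

lemma banach_lattice_squeeze:
  fixes l h v :: "nat \<Rightarrow> 'b::banach_lattice"
  assumes "\<And>n. l n \<le> v n" "\<And>n. v n \<le> h n" "\<And>n. l n \<le> f" "\<And>n. f \<le> h n"
    and "(\<lambda>n. norm (l n - h n)) \<longlonglongrightarrow> 0"
  shows "v \<longlonglongrightarrow> f"
proof -
  have "norm (v n - f) \<le> 2 * norm (l n - h n)" for n
  proof -
    have "norm (v n - f) \<le> norm (v n - l n) + norm (f - l n)"
      using norm_triangle_ineq4[of "v n - l n" "f - l n"] by simp
    also have "\<dots> \<le> norm (h n - l n) + norm (h n - l n)"
      using assms by (intro add_mono norm_diff_le_if_between) auto
    finally show ?thesis
      by (simp add: norm_minus_commute)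
  qed
  then have "eventually (\<lambda>n. norm (v n - f) \<le> 2 * norm (l n - h n)) sequentially"
    by (rule always_eventually[OF allI])
  moreover have "(\<lambda>n. 2 * norm (l n - h n)) \<longlonglongrightarrow> 0"
    using tendsto_mult_right_zero[OF assms(5)] by simp
  ultimately have "(\<lambda>n. v n - f) \<longlonglongrightarrow> 0"
    by (rule Lim_null_comparison)
  then show ?thesis
    by (rule LIM_zero_cancel)
qed

lemma minimal_values_on_decreasing_sets:
  fixes R :: "'a \<Rightarrow> 'b::{complete_linorder, linorder_topology}"
  assumes "decseq U" "\<And>n. u n \<in> U n" "\<And>n v. v \<in> U n \<Longrightarrow> R (u n) \<le> R v" "\<And>n. x \<in> U n"
  shows "(\<lambda>n. R (u n)) \<longlonglongrightarrow> (SUP n. R (u n))" "(SUP n. R (u n)) \<le> R x"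
proof -
  have "incseq (\<lambda>n. R (u n))"
    using assms(1-3) unfolding decseq_def incseq_def by blast
  then show "(\<lambda>n. R (u n)) \<longlonglongrightarrow> (SUP n. R (u n))"
    by (rule LIMSEQ_SUP)
  show "(SUP n. R (u n)) \<le> R x"
    by (rule SUP_least) (rule assms(3)[OF assms(4)])
qed

lemma LIMSEQ_if_seq_compact_inj_image:
  fixes A :: "'a::metric_space \<Rightarrow> 'b::metric_space"
  assumes "continuous_on UNIV A" "inj A" "seq_compact S" "\<And>n. u n \<in> S"
    and "(\<lambda>n. A (u n)) \<longlonglongrightarrow> A x"
  shows "u \<longlonglongrightarrow> x"
proof (rule LIMSEQ_subsubseq)
  fix r :: "nat \<Rightarrow> nat"
  assume "strict_mono r"
  have "\<forall>n. (u \<circ> r) n \<in> S"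
    using assms(4) by simp
  then obtain l and q :: "nat \<Rightarrow> nat" where q: "strict_mono q" "(u \<circ> r \<circ> q) \<longlonglongrightarrow> l"
    using assms(3) unfolding seq_compact_def by blast
  have "(\<lambda>n. A ((u \<circ> r \<circ> q) n)) \<longlonglongrightarrow> A l"
    using continuous_on_tendsto_compose[OF assms(1) q(2)] by simp
  moreover have "(\<lambda>n. A ((u \<circ> r \<circ> q) n)) \<longlonglongrightarrow> A x"
    using LIMSEQ_subseq_LIMSEQ[OF assms(5) strict_mono_o[OF \<open>strict_mono r\<close> q(1)]]
    by (simp add: o_def)
  ultimately have "l = x"
    using LIMSEQ_unique injD[OF assms(2)] by blast
  then show "\<exists>q. strict_mono q \<and> (u \<circ> r \<circ> q) \<longlonglongrightarrow> x"
    using q by blast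
qed

lemma weak_conv_subsubseq_if_weakly_seq_compact_inj_image:
  fixes r :: "nat \<Rightarrow> nat"
  assumes "bounded_linear A" "inj A" "weakly_seq_compact S" "\<And>n. u n \<in> S"
    and "(\<lambda>n. A (u n)) \<longlonglongrightarrow> A x" "strict_mono r"
  obtains q :: "nat \<Rightarrow> nat" where "strict_mono q" "weak_conv (u \<circ> r \<circ> q) x"
proof -
  have "\<forall>n. (u \<circ> r) n \<in> S"
    using assms(4) by simp
  then obtain l and q :: "nat \<Rightarrow> nat" where q: "strict_mono q" "weak_conv (u \<circ> r \<circ> q) l"
    using assms(3) unfolding weakly_seq_compact_def by blast
  have "(\<lambda>n. A ((u \<circ> r \<circ> q) n)) \<longlonglongrightarrow> A x"
    using LIMSEQ_subseq_LIMSEQ[OF assms(5) strict_mono_o[OF assms(6) q(1)]]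
    by (simp add: o_def)
  then have "l = x"
    using weak_limit_eq_if_image_tendsto[OF assms(1,2) q(2)] by blast
  then show ?thesis
    using q that by blast
qed

lemma LIMSEQ_if_weakly_seq_compact_radon_riesz:
  assumes A: "bounded_linear A" "inj A"
    and R: "weakly_lsc R" "radon_riesz R"
    and S: "weakly_seq_compact S" "\<And>n. u n \<in> S"
    and "(\<lambda>n. A (u n)) \<longlonglongrightarrow> A x" "(\<lambda>n. R (u n)) \<longlonglongrightarrow> L" "L \<le> R x"
  shows "L = R x" "u \<longlonglongrightarrow> x"
proof -
  have R_subseq: "(\<lambda>n. R ((u \<circ> q) n)) \<longlonglongrightarrow> L" if "strict_mono q" for q :: "nat \<Rightarrow> nat"
    using LIMSEQ_subseq_LIMSEQ[OF assms(8) that] by (simp add: o_def)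
  obtain q where q: "strict_mono q" "weak_conv (u \<circ> id \<circ> q) x"
    using weak_conv_subsubseq_if_weakly_seq_compact_inj_image[OF A S assms(7) strict_mono_id] .
  have "weak_conv (u \<circ> q) x"
    using q(2) by simp
  then have "R x \<le> liminf (\<lambda>n. R ((u \<circ> q) n))"
    using R(1) unfolding weakly_lsc_def by blast
  also have "\<dots> = L"
    using lim_imp_Liminf[OF trivial_limit_sequentially R_subseq[OF q(1)]] .
  finally show "L = R x"
    using assms(9) by simp
  show "u \<longlonglongrightarrow> x"
  proof (rule LIMSEQ_subsubseq)
    fix r :: "nat \<Rightarrow> nat"
    assume r: "strict_mono r"
    then obtain q where q: "strict_mono q" "weak_conv (u \<circ> r \<circ> q) x"
      using weak_conv_subsubseq_if_weakly_seq_compact_inj_image[OF A S assms(7)] by blast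
    moreover have "(\<lambda>n. R ((u \<circ> r \<circ> q) n)) \<longlonglongrightarrow> R x"
      using R_subseq[OF strict_mono_o[OF r q(1)]] \<open>L = R x\<close> by (simp add: o_assoc)
    ultimately show "\<exists>q. strict_mono q \<and> (u \<circ> r \<circ> q) \<longlonglongrightarrow> x"
      using R(2) unfolding radon_riesz_def by blast
  qed
qed

theorem theorem3:
  fixes A :: "'a::banach \<Rightarrow> 'b::banach_lattice"
    and f :: 'b and ubar :: 'a
    and fl fu :: "nat \<Rightarrow> 'b"
    and R :: "'a \<Rightarrow> ereal"
    and u :: "nat \<Rightarrow> 'a"
  assumes A_lin: "bounded_linear A"
    and A_inj: "inj A"
    and exact: "A ubar = f"
    and fl_mono: "\<And>n. fl n \<le> fl (Suc n)"
    and fu_mono: "\<And>n. fu (Suc n) \<le> fu n"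
    and fl_le: "\<And>n. fl n \<le> f"
    and le_fu: "\<And>n. f \<le> fu n"
    and gap: "(\<lambda>n. norm (fl n - fu n)) \<longlonglongrightarrow> 0"
    and R_cond:
      "((\<exists>c::real. \<forall>v. ereal c \<le> R v) \<and> lsc R \<and>
          (\<forall>C::real. seq_compact {v. R v \<le> ereal C}))
       \<or> ((\<exists>c::real. \<forall>v. ereal c \<le> R v) \<and> weakly_lsc R \<and>
          (\<forall>C::real. weakly_seq_compact {v. R v \<le> ereal C}) \<and> radon_riesz R)"
    and R_ubar: "R ubar < \<infinity>"
    and u_feas: "\<And>n. fl n \<le> A (u n) \<and> A (u n) \<le> fu n"
    and u_min: "\<And>n v. fl n \<le> A v \<Longrightarrow> A v \<le> fu n \<Longrightarrow> R (u n) \<le> R v"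
  shows "u \<longlonglongrightarrow> ubar \<and> (\<lambda>n. R (u n)) \<longlonglongrightarrow> R ubar"
proof -
  define U where "U n = {v. fl n \<le> A v \<and> A v \<le> fu n}" for n
  have "decseq U"
    unfolding U_def using fl_mono fu_mono
    by (intro decseq_SucI) (blast intro: order_trans)
  moreover have ubar_feasible: "ubar \<in> U n" for n
    unfolding U_def using exact fl_le le_fu by simp
  ultimately have R_lim: "(\<lambda>n. R (u n)) \<longlonglongrightarrow> (SUP n. R (u n))" and "(SUP n. R (u n)) \<le> R ubar"
    using minimal_values_on_decreasing_sets[of U u R ubar] u_feas u_min unfolding U_def by auto
  obtain c :: real where "ereal c \<le> R ubar"
    using R_cond by blast
  then obtain C :: real where "R ubar = ereal C"
    using R_ubar by (cases "R ubar") auto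
  moreover have "R (u n) \<le> R ubar" for n
    using u_min ubar_feasible unfolding U_def by blast
  ultimately have level: "u n \<in> {v. R v \<le> ereal C}" for n
    by simp
  have "(\<lambda>n. A (u n)) \<longlonglongrightarrow> A ubar"
    unfolding exact using u_feas by (intro banach_lattice_squeeze[OF _ _ fl_le le_fu gap]) simp_all
  from R_cond show ?thesis
  proof (elim disjE conjE)
    assume "lsc R" "\<forall>C. seq_compact {v. R v \<le> ereal C}"
    then have "u \<longlonglongrightarrow> ubar"
      using linear_continuous_on[OF A_lin] A_inj level \<open>(\<lambda>n. A (u n)) \<longlonglongrightarrow> A ubar\<close>
      by (intro LIMSEQ_if_seq_compact_inj_image[of A "{v. R v \<le> ereal C}"]) auto
    moreover have "R ubar \<le> (SUP n. R (u n))"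
      using lsc_le_tendsto[OF \<open>lsc R\<close> calculation R_lim] .
    ultimately show ?thesis
      using R_lim \<open>(SUP n. R (u n)) \<le> R ubar\<close> by (simp add: antisym)
  next
    assume "weakly_lsc R" "\<forall>C. weakly_seq_compact {v. R v \<le> ereal C}" "radon_riesz R"
    then have "(SUP n. R (u n)) = R ubar \<and> u \<longlonglongrightarrow> ubar"
      using A_lin A_inj level \<open>(\<lambda>n. A (u n)) \<longlonglongrightarrow> A ubar\<close> R_lim \<open>(SUP n. R (u n)) \<le> R ubar\<close>
      by (intro conjI LIMSEQ_if_weakly_seq_compact_radon_riesz[of A R "{v. R v \<le> ereal C}"]) auto
    then show ?thesis
      using R_lim by simp
  qed
qed

end
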